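(* Let $G_0$ be a connected graph containing vertices $u_1,u_2,u_3,u_4$ with $d_{G_0}(u_1)=1$, $d_{G_0}(u_2)=2$, $d_{G_0}(u_3)\in\{3,4\}$, $d_{G_0}(u_4)=1$, and $u_1u_2,u_3u_4\in E(G_0)$. Let $P=v_1v_2\cdots v_l$ ($l\ge 1$) be a path vertex-disjoint from $G_0$. Let $G_1$ be the graph obtained from the disjoint union of $G_0$ and $P$ by adding the edge $u_1v_1$, and let $G_2=G_1-u_1v_1+u_4v_1$. Then $SO(G_1)>SO(G_2)$ and $SO_{red}(G_1)>SO_{red}(G_2)$.
   Context: $d_G(u)$ denotes the degree of $u$ in $G$. $SO(G)=\sum_{uv\in E(G)}\sqrt{d_G(u)^2+d_G(v)^2}$ and $SO_{red}(G)=\sum_{uv\in E(G)}\sqrt{(d_G(u)-1)^2+(d_G(v)-1)^2}$. *)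

theory Defs
  imports Complex_Main
begin

definition simple_graph :: "'a set \<Rightarrow> 'a set set \<Rightarrow> bool" where
  "simple_graph V E \<longleftrightarrow> finite V \<and>
     (\<forall>e\<in>E. \<exists>x y. x \<in> V \<and> y \<in> V \<and> x \<noteq> y \<and> e = {x, y})"

definition deg :: "'a set set \<Rightarrow> 'a \<Rightarrow> nat" where
  "deg E u = card {e \<in> E. u \<in> e}"

definition graph_connected :: "'a set \<Rightarrow> 'a set set \<Rightarrow> bool" where
  "graph_connected V E \<longleftrightarrow> (\<forall>x\<in>V. \<forall>y\<in>V. (\<lambda>a b. {a, b} \<in> E)\<^sup>*\<^sup>* x y)"

text \<open>Sombor index: sum over edges uv of sqrt(d(u)^2 + d(v)^2); for an edge e = {u,v}
  with u \<noteq> v this is sqrt of the sum over x in e of d(x)^2.\<close>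
definition SO :: "'a set set \<Rightarrow> real" where
  "SO E = (\<Sum>e\<in>E. sqrt (\<Sum>x\<in>e. (real (deg E x))\<^sup>2))"

definition SO_red :: "'a set set \<Rightarrow> real" where
  "SO_red E = (\<Sum>e\<in>E. sqrt (\<Sum>x\<in>e. (real (deg E x) - 1)\<^sup>2))"

definition path_edges :: "(nat \<Rightarrow> 'a) \<Rightarrow> nat \<Rightarrow> 'a set set" where
  "path_edges v l = {{v i, v (Suc i)} | i. 1 \<le> i \<and> i < l}"

end

theory Submission
  imports Defs
begin

text \<open>Both indices have the form \<open>\<Sum>uv. sqrt (\<phi> (d u) + \<phi> (d v))\<close>. Moving the path from
  \<open>u\<^sub>1\<close> to \<open>u\<^sub>4\<close> leaves the degrees of all vertices except \<open>u\<^sub>1\<close> and \<open>u\<^sub>4\<close>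
  unchanged, and the new edge keeps its value, so only the edges \<open>u\<^sub>1u\<^sub>2\<close> and \<open>u\<^sub>3u\<^sub>4\<close>
  contribute to the difference: \<open>u\<^sub>1u\<^sub>2\<close> loses \<open>sqrt (\<phi> 2 + \<phi> 2) - sqrt (\<phi> 1 + \<phi> 2)\<close> and
  \<open>u\<^sub>3u\<^sub>4\<close> gains \<open>sqrt (\<phi> 2 + \<phi> D) - sqrt (\<phi> 1 + \<phi> D)\<close>, where \<open>D = d(u\<^sub>3)\<close>.
  By concavity of the square root the increment \<open>sqrt (\<phi> 2 + s) - sqrt (\<phi> 1 + s)\<close>
  strictly decreases in \<open>s\<close>, and \<open>\<phi> 2 < \<phi> D\<close> for both choices of \<open>\<phi>\<close>.\<close>

lemma sqrt_increment_strict_antimono: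
  fixes a b s t :: real
  assumes "0 \<le> a" "a < b" "0 \<le> s" "s < t"
  shows "sqrt (b + t) - sqrt (a + t) < sqrt (b + s) - sqrt (a + s)"
proof -
  have "(b + t) * (a + s) < (b + s) * (a + t)"
  proof -
    have "(b + s) * (a + t) - (b + t) * (a + s) = (b - a) * (t - s)"
      by (simp add: algebra_simps)
    also have "\<dots> > 0" using assms by simp
    finally show ?thesis by simp
  qed
  then have "sqrt (b + t) * sqrt (a + s) < sqrt (b + s) * sqrt (a + t)"
    using assms by (simp add: real_sqrt_mult[symmetric])
  then have "(sqrt (b + t) + sqrt (a + s))\<^sup>2 < (sqrt (b + s) + sqrt (a + t))\<^sup>2"
    using assms by (simp add: power2_sum)
  then have "sqrt (b + t) + sqrt (a + s) < sqrt (b + s) + sqrt (a + t)"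
    by (rule power_less_imp_less_base) (use assms in simp)
  then show ?thesis by simp
qed

definition sombor_type_index :: "(nat \<Rightarrow> real) \<Rightarrow> 'a set set \<Rightarrow> real" where
  "sombor_type_index \<phi> E = (\<Sum>e\<in>E. sqrt (\<Sum>x\<in>e. \<phi> (deg E x)))"

lemma SO_eq_sombor_type_index: "SO E = sombor_type_index (\<lambda>n. (real n)\<^sup>2) E"
  unfolding SO_def sombor_type_index_def ..

lemma SO_red_eq_sombor_type_index: "SO_red E = sombor_type_index (\<lambda>n. (real n - 1)\<^sup>2) E"
  unfolding SO_red_def sombor_type_index_def ..

lemma finite_edges_simple_graph:
  assumes "simple_graph V E"
  shows "finite E"
proof (rule finite_subset)
  show "E \<subseteq> Pow V" using assms unfolding simple_graph_def by auto
  show "finite (Pow V)" using assms unfolding simple_graph_def by simp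
qed

lemma deg_insert:
  assumes "finite B" "f \<notin> B"
  shows "deg (insert f B) x = deg B x + (if x \<in> f then 1 else 0)"
proof -
  have "{e \<in> insert f B. x \<in> e} = (if x \<in> f then insert f {e \<in> B. x \<in> e} else {e \<in> B. x \<in> e})"
    by auto
  then show ?thesis using assms by (simp add: deg_def)
qed

lemma deg_one_edge_unique:
  assumes "deg E a = 1" "{a, p} \<in> E" "e \<in> E" "a \<in> e"
  shows "e = {a, p}"
proof -
  obtain f where f: "{e \<in> E. a \<in> e} = {f}"
    using assms(1) unfolding deg_def by (rule card_1_singletonE)
  have "{a, p} \<in> {e \<in> E. a \<in> e}" "e \<in> {e \<in> E. a \<in> e}" using assms(2-4) by simp_all
  then show ?thesis unfolding f by simp
qed

lemma deg_Un_avoiding: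
  assumes "\<forall>e\<in>F. x \<notin> e"
  shows "deg (E \<union> F) x = deg E x"
proof -
  have "{e \<in> E \<union> F. x \<in> e} = {e \<in> E. x \<in> e}" using assms by blast
  then show ?thesis unfolding deg_def by simp
qed

lemma path_edges_eq_image: "path_edges v l = (\<lambda>i. {v i, v (Suc i)}) ` {1..<l}"
  unfolding path_edges_def by auto

lemma finite_path_edges: "finite (path_edges v l)"
  unfolding path_edges_eq_image by simp

lemma path_edges_avoid:
  assumes "v ` {1..l} \<inter> V = {}" "x \<in> V" "e \<in> path_edges v l"
  shows "x \<notin> e"
proof -
  obtain i where "1 \<le> i" "i < l" "e = {v i, v (Suc i)}"
    using assms(3) unfolding path_edges_def by blast
  then have "e \<subseteq> v ` {1..l}" by auto
  then show ?thesis using assms(1,2) by blast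
qed

lemma sombor_type_index_move_edge:
  assumes B: "finite B"
    and leaves: "deg B a = 1" "deg B b = 1" "{a, p} \<in> B" "{b, q} \<in> B"
    and distinct: "a \<noteq> p" "b \<noteq> q" "{a, p} \<noteq> {b, q}" "w \<notin> {a, b, p, q}"
  shows "sombor_type_index \<phi> (insert {a, w} B) - sombor_type_index \<phi> (insert {b, w} B) =
      (sqrt (\<phi> 2 + \<phi> (deg B p)) - sqrt (\<phi> 1 + \<phi> (deg B p)))
    - (sqrt (\<phi> 2 + \<phi> (deg B q)) - sqrt (\<phi> 1 + \<phi> (deg B q)))"
proof -
  have a_edge: "e = {a, p}" if "e \<in> B" "a \<in> e" for e
    using deg_one_edge_unique[OF leaves(1,3)] that .
  have b_edge: "e = {b, q}" if "e \<in> B" "b \<in> e" for e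
    using deg_one_edge_unique[OF leaves(2,4)] that .
  have ne: "a \<noteq> b" "p \<noteq> b" "q \<noteq> a" "a \<noteq> w" "b \<noteq> w" "p \<noteq> w" "q \<noteq> w"
    using a_edge[OF leaves(4)] b_edge[OF leaves(3)] distinct by auto
  have new_edges: "{a, w} \<notin> B" "{b, w} \<notin> B"
    using a_edge b_edge ne by (metis doubleton_eq_iff insertI1)+
  define E1 where "E1 = insert {a, w} B"
  define E2 where "E2 = insert {b, w} B"
  define val where "val E e = sqrt (\<Sum>x\<in>e. \<phi> (deg E x))" for E :: "'a set set" and e
  have deg1: "deg E1 x = deg B x + (if x \<in> {a, w} then 1 else 0)" for x
    unfolding E1_def using deg_insert[OF B new_edges(1)] .
  have deg2: "deg E2 x = deg B x + (if x \<in> {b, w} then 1 else 0)" for x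
    unfolding E2_def using deg_insert[OF B new_edges(2)] .
  define R where "R = B - {{a, p}, {b, q}}"
  have sum_B: "sum g B = g {a, p} + g {b, q} + sum g R" for g :: "'a set \<Rightarrow> real"
  proof -
    have "B = insert {a, p} (insert {b, q} R)" using leaves(3,4) unfolding R_def by blast
    moreover have "finite R" "{a, p} \<notin> insert {b, q} R" "{b, q} \<notin> R"
      unfolding R_def using B distinct(3) by auto
    ultimately show ?thesis by (simp add: add.assoc)
  qed
  have split: "sombor_type_index \<phi> (insert f B) = val (insert f B) f
      + val (insert f B) {a, p} + val (insert f B) {b, q} + sum (val (insert f B)) R"
    if "f \<notin> B" for f
    using that B sum_B[of "val (insert f B)"] unfolding sombor_type_index_def val_def
    by (simp add: add.assoc)
  have "sum (val E1) R = sum (val E2) R"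
  proof (rule sum.cong[OF refl])
    fix e assume "e \<in> R"
    then have "a \<notin> e" "b \<notin> e" using a_edge b_edge unfolding R_def by blast+
    then have "deg E1 x = deg E2 x" if "x \<in> e" for x using that deg1 deg2 by auto
    then show "val E1 e = val E2 e" unfolding val_def by simp
  qed
  moreover have "val E1 {a, w} = val E2 {b, w}"
    unfolding val_def using ne deg1 deg2 leaves(1,2) by simp
  moreover have "val E1 {a, p} = sqrt (\<phi> 2 + \<phi> (deg B p))"
    "val E2 {a, p} = sqrt (\<phi> 1 + \<phi> (deg B p))"
    "val E1 {b, q} = sqrt (\<phi> 1 + \<phi> (deg B q))"
    "val E2 {b, q} = sqrt (\<phi> 2 + \<phi> (deg B q))"
    unfolding val_def using ne distinct(1,2) deg1 deg2 leaves(1,2) by (simp_all add: numeral_2_eq_2)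
  ultimately show ?thesis
    using split[OF new_edges(1)] split[OF new_edges(2)] unfolding E1_def E2_def by simp
qed

lemma sombor_type_index_move_edge_less:
  assumes B: "finite B"
    and leaves: "deg B a = 1" "deg B b = 1" "{a, p} \<in> B" "{b, q} \<in> B"
    and distinct: "a \<noteq> p" "b \<noteq> q" "{a, p} \<noteq> {b, q}" "w \<notin> {a, b, p, q}"
    and \<phi>: "0 \<le> \<phi> 1" "\<phi> 1 < \<phi> 2" "0 \<le> \<phi> (deg B p)" "\<phi> (deg B p) < \<phi> (deg B q)"
  shows "sombor_type_index \<phi> (insert {b, w} B) < sombor_type_index \<phi> (insert {a, w} B)"
  using sombor_type_index_move_edge[OF assms(1-9), of \<phi>]
    sqrt_increment_strict_antimono[OF \<phi>]
  by linarith

theorem lemma2p1: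
  fixes V0 :: "'a set" and E0 :: "'a set set"
    and u1 u2 u3 u4 :: 'a and v :: "nat \<Rightarrow> 'a" and l :: nat
    and E1 E2 :: "'a set set"
  assumes G0: "simple_graph V0 E0" "graph_connected V0 E0"
    and u: "u1 \<in> V0" "u2 \<in> V0" "u3 \<in> V0" "u4 \<in> V0"
    and d: "deg E0 u1 = 1" "deg E0 u2 = 2" "deg E0 u3 \<in> {3, 4}" "deg E0 u4 = 1"
    and e: "{u1, u2} \<in> E0" "{u3, u4} \<in> E0"
    and l: "l \<ge> 1"
    and P: "inj_on v {1..l}" "v ` {1..l} \<inter> V0 = {}"
    and E1_def: "E1 = E0 \<union> path_edges v l \<union> {{u1, v 1}}"
    and E2_def: "E2 = (E1 - {{u1, v 1}}) \<union> {{u4, v 1}}"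
  shows "SO E1 > SO E2 \<and> SO_red E1 > SO_red E2"
proof -
  define B where "B = E0 \<union> path_edges v l"
  have finB: "finite B"
    unfolding B_def using finite_edges_simple_graph[OF G0(1)] finite_path_edges by simp
  have degB: "deg B x = deg E0 x" if "x \<in> V0" for x
    unfolding B_def by (rule deg_Un_avoiding) (use path_edges_avoid[OF P(2) that] in blast)
  have degs: "deg B u1 = 1" "deg B u4 = 1" "real (deg B u2) = 2" "3 \<le> real (deg B u3)"
    using degB[OF u(1)] degB[OF u(4)] degB[OF u(2)] degB[OF u(3)] d by auto
  have edges: "{u1, u2} \<in> B" "{u4, u3} \<in> B" using e unfolding B_def by (auto simp: insert_commute)
  have "v 1 \<in> v ` {1..l}" using l by simp
  then have "v 1 \<notin> V0" using P(2) by blast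
  then have distinct: "u1 \<noteq> u2" "u4 \<noteq> u3" "{u1, u2} \<noteq> {u4, u3}" "v 1 \<notin> {u1, u4, u2, u3}"
    using d u by (auto simp: doubleton_eq_iff)
  have "{u1, v 1} \<notin> B"
    using deg_one_edge_unique[OF degs(1) edges(1)] distinct(4) by (auto simp: doubleton_eq_iff)
  then have E12: "E1 = insert {u1, v 1} B" "E2 = insert {u4, v 1} B"
    unfolding E1_def E2_def B_def by auto
  have D: "(real (deg B u2))\<^sup>2 < (real (deg B u3))\<^sup>2"
    "(real (deg B u2) - 1)\<^sup>2 < (real (deg B u3) - 1)\<^sup>2"
    using degs(3,4) by (intro power_strict_mono; linarith)+
  note move = sombor_type_index_move_edge_less[OF finB degs(1,2) edges distinct]
  have "SO E2 < SO E1"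
    unfolding SO_eq_sombor_type_index E12 by (rule move) (simp_all add: D)
  moreover have "SO_red E2 < SO_red E1"
    unfolding SO_red_eq_sombor_type_index E12 by (rule move) (simp_all add: D)
  ultimately show ?thesis by simp
qed

end
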